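(* Let $F$ be a digraph and let $a$ be an arc of $F$. If $F-a$ is $\vec{\chi}$-maderian, then $F$ is $\vec{\chi}$-maderian and $\mathrm{mad}_{\vec{\chi}}(F)\le 4\cdot\mathrm{mad}_{\vec{\chi}}(F-a)-3$.
   Context: $\vec{\chi}(D)$, the dichromatic number, is the least $k$ such that $V(D)$ can be partitioned into $k$ sets each inducing an acyclic subdigraph. A subdivision of $F$ is obtained by replacing each arc $(x,y)$ by a directed $(x,y)$-path, internally disjoint with new internal vertices. $F$ is $\vec{\chi}$-maderian if there is an integer $c$ such that every digraph $D$ with $\vec{\chi}(D)\ge c$ contains a subdivision of $F$ as a subdigraph; $\mathrm{mad}_{\vec{\chi}}(F)$ is the least such $c$. *)

theory Defs
  imports Main
begin

text \<open>A (finite, loopless) digraph is a pair (V, A) of a vertex set and an arc set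
  A \<subseteq> V \<times> V without loops. Digons (opposite arcs) are allowed, parallel arcs are not.\<close>

type_synonym 'a digraph = "'a set \<times> ('a \<times> 'a) set"

definition verts :: "'a digraph \<Rightarrow> 'a set" where "verts D = fst D"
definition arcs :: "'a digraph \<Rightarrow> ('a \<times> 'a) set" where "arcs D = snd D"

definition is_digraph :: "'a digraph \<Rightarrow> bool" where
  "is_digraph D \<longleftrightarrow> finite (verts D) \<and> arcs D \<subseteq> verts D \<times> verts D
     \<and> (\<forall>x. (x, x) \<notin> arcs D)"

definition del_arc :: "'a digraph \<Rightarrow> 'a \<times> 'a \<Rightarrow> 'a digraph" where
  "del_arc D a = (verts D, arcs D - {a})"

definition induces_acyclic :: "'a digraph \<Rightarrow> 'a set \<Rightarrow> bool" where
  "induces_acyclic D S \<longleftrightarrow> acyclic (arcs D \<inter> (S \<times> S))"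

definition dicolouring :: "'a digraph \<Rightarrow> nat \<Rightarrow> ('a \<Rightarrow> nat) \<Rightarrow> bool" where
  "dicolouring D k f \<longleftrightarrow> (\<forall>v\<in>verts D. f v < k)
     \<and> (\<forall>i<k. induces_acyclic D {v \<in> verts D. f v = i})"

definition dichromatic :: "'a digraph \<Rightarrow> nat" where
  "dichromatic D = (LEAST k. \<exists>f. dicolouring D k f)"

definition dpath :: "'b digraph \<Rightarrow> 'b list \<Rightarrow> 'b \<Rightarrow> 'b \<Rightarrow> bool" where
  "dpath D p x y \<longleftrightarrow> length p \<ge> 2 \<and> distinct p \<and> hd p = x \<and> last p = y
     \<and> (\<forall>i. Suc i < length p \<longrightarrow> (p ! i, p ! Suc i) \<in> arcs D)"

definition internal :: "'b list \<Rightarrow> 'b set" where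
  "internal p = set (butlast (tl p))"

definition contains_subdivision :: "'b digraph \<Rightarrow> 'a digraph \<Rightarrow> bool" where
  "contains_subdivision D F \<longleftrightarrow> (\<exists>\<phi> P.
     inj_on \<phi> (verts F) \<and> \<phi> ` verts F \<subseteq> verts D
     \<and> (\<forall>(x, y) \<in> arcs F. dpath D (P (x, y)) (\<phi> x) (\<phi> y)
          \<and> internal (P (x, y)) \<inter> \<phi> ` verts F = {})
     \<and> (\<forall>e \<in> arcs F. \<forall>e' \<in> arcs F. e \<noteq> e' \<longrightarrow> internal (P e) \<inter> internal (P e') = {}))"

text \<open>Digraphs D range over all finite digraphs; up to isomorphism these may be taken on
  vertex type nat.\<close>
definition maderian_bound :: "'a digraph \<Rightarrow> nat \<Rightarrow> bool" where
  "maderian_bound F c \<longleftrightarrow> (\<forall>D :: nat digraph. is_digraph D \<longrightarrow> dichromatic D \<ge> c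
       \<longrightarrow> contains_subdivision D F)"

definition maderian :: "'a digraph \<Rightarrow> bool" where
  "maderian F \<longleftrightarrow> (\<exists>c. maderian_bound F c)"

definition mad :: "'a digraph \<Rightarrow> nat" where
  "mad F = (LEAST c. maderian_bound F c)"

end

theory Submission
  imports Defs "HOL-Library.Transitive_Closure_Table"
begin

text \<open>Let m be the bound for F - a and let D contain no subdivision of F; we colour D with
  4(m - 1) colours by induction on its order. Fix a vertex r with strong component C and
  colour D - C inductively. Split C into cells according to the pair (dist(r, v), dist(v, r)).
  Any two vertices x, y of a cell are joined by a path whose interior avoids the cell: walk
  from x to r through vertices strictly closer to r, then from r to y through vertices
  strictly closer from r. So a cell of dichromatic number at least m would contain a
  subdivision of F - a, which such a path completes to one of F; hence each cell is
  (m - 1)-colourable. Colour a vertex of C by its colour in its cell together with the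
  parities of its two distances. Along an arc inside a colour class both distances keep
  their parity and change by at most one in the relevant direction, so dist(r, \<cdot>) cannot
  increase and dist(\<cdot>, r) cannot decrease; a monochromatic cycle in C therefore lies in a
  single cell, where it is excluded by the cell colouring.\<close>

lemma antimono_along_rtrancl:
  fixes \<mu> :: "'a \<Rightarrow> 'b::preorder"
  assumes "(x, y) \<in> R\<^sup>*" and "\<And>a b. (a, b) \<in> R \<Longrightarrow> \<mu> b \<le> \<mu> a"
  shows "\<mu> y \<le> \<mu> x"
  using assms(1) by induction (use assms(2) order_trans in blast)+

lemma trancl_restrict_if_cycle_closed:
  assumes "(x, y) \<in> R\<^sup>+"
  shows "(y, x) \<in> R\<^sup>* \<Longrightarrow> x \<in> Y \<Longrightarrow> (\<And>z. (x, z) \<in> R\<^sup>+ \<Longrightarrow> (z, x) \<in> R\<^sup>* \<Longrightarrow> z \<in> Y)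
    \<Longrightarrow> (x, y) \<in> (R \<inter> Y \<times> Y)\<^sup>+"
  using assms
proof (induction rule: trancl_induct)
  case (base y)
  then show ?case by blast
next
  case (step y z)
  have "(y, x) \<in> R\<^sup>*"
    using step.hyps(2) step.prems(1) by (rule converse_rtrancl_into_rtrancl)
  then have "(x, y) \<in> (R \<inter> Y \<times> Y)\<^sup>+" "y \<in> Y"
    using step.IH step.prems(2,3) step.hyps(1) by blast+
  moreover have "z \<in> Y"
    using step.prems(1,3) step.hyps by (meson trancl.trancl_into_trancl)
  ultimately show ?case
    using step.hyps(2) by (meson IntI SigmaI trancl.trancl_into_trancl)
qed

lemma acyclic_if_acyclic_fibres:
  assumes "\<And>x y. (x, y) \<in> R\<^sup>+ \<Longrightarrow> (y, x) \<in> R\<^sup>+ \<Longrightarrow> \<pi> x = \<pi> y"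
    and "\<And>k. acyclic (R \<inter> {v. \<pi> v = k} \<times> {v. \<pi> v = k})"
  shows "acyclic R"
proof (rule acyclicI, intro allI notI)
  fix x assume cycle: "(x, x) \<in> R\<^sup>+"
  have "(x, x) \<in> (R \<inter> {v. \<pi> v = \<pi> x} \<times> {v. \<pi> v = \<pi> x})\<^sup>+"
    using cycle
  proof (rule trancl_restrict_if_cycle_closed)
    fix z assume "(x, z) \<in> R\<^sup>+" "(z, x) \<in> R\<^sup>*"
    then show "z \<in> {v. \<pi> v = \<pi> x}"
      using assms(1) by (auto dest: rtranclD)
  qed auto
  then show False
    using assms(2) unfolding acyclic_def by blast
qed

(* Only meaningful when y is reachable from x: otherwise LEAST ranges over an empty set. *)
definition arc_distance :: "'b digraph \<Rightarrow> 'b \<Rightarrow> 'b \<Rightarrow> nat" where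
  "arc_distance D x y = (LEAST n. (x, y) \<in> arcs D ^^ n)"

lemma relpow_arc_distance: "(x, y) \<in> (arcs D)\<^sup>* \<Longrightarrow> (x, y) \<in> arcs D ^^ arc_distance D x y"
  unfolding arc_distance_def by (metis LeastI_ex rtrancl_power)

lemma arc_distance_le: "(x, y) \<in> arcs D ^^ n \<Longrightarrow> arc_distance D x y \<le> n"
  unfolding arc_distance_def by (rule Least_le)

lemma arc_distance_eq_0: "arc_distance D x y = 0 \<Longrightarrow> (x, y) \<in> (arcs D)\<^sup>* \<Longrightarrow> x = y"
  using relpow_arc_distance by fastforce

lemma arc_distance_from_Suc:
  "(x, y) \<in> (arcs D)\<^sup>* \<Longrightarrow> (y, z) \<in> arcs D \<Longrightarrow> arc_distance D x z \<le> Suc (arc_distance D x y)"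
  by (meson arc_distance_le relpow_Suc_I relpow_arc_distance)

lemma arc_distance_to_Suc:
  "(y, z) \<in> arcs D \<Longrightarrow> (z, x) \<in> (arcs D)\<^sup>* \<Longrightarrow> arc_distance D y x \<le> Suc (arc_distance D z x)"
  by (meson arc_distance_le relpow_Suc_I2 relpow_arc_distance)

lemma rtrancl_through_closer_to:
  "(w, r) \<in> arcs D ^^ n \<Longrightarrow>
    (w, r) \<in> (arcs D \<inter> ({w} \<union> {v. arc_distance D v r < n}) \<times> {v. arc_distance D v r < n})\<^sup>*"
proof (induction n arbitrary: w)
  case 0
  then show ?case by simp
next
  case (Suc n)
  then obtain w' where w': "(w, w') \<in> arcs D" "(w', r) \<in> arcs D ^^ n"
    by (meson relpow_Suc_D2)
  have "arc_distance D w' r < Suc n"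
    using arc_distance_le[OF w'(2)] by simp
  let ?Z = "{v. arc_distance D v r < Suc n}"
  have "(w', r) \<in> (arcs D \<inter> ({w} \<union> ?Z) \<times> ?Z)\<^sup>*"
    using Suc.IH[OF w'(2)] by (rule rtrancl_mono[THEN subsetD, rotated])
      (use \<open>arc_distance D w' r < Suc n\<close> in auto)
  moreover have "(w, w') \<in> arcs D \<inter> ({w} \<union> ?Z) \<times> ?Z"
    using w'(1) \<open>arc_distance D w' r < Suc n\<close> by simp
  ultimately show ?case
    by (meson converse_rtrancl_into_rtrancl)
qed

lemma rtrancl_through_closer_from:
  "(r, y) \<in> arcs D ^^ n \<Longrightarrow>
    (r, y) \<in> (arcs D \<inter> {v. arc_distance D r v < n} \<times> ({y} \<union> {v. arc_distance D r v < n}))\<^sup>*"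
proof (induction n arbitrary: y)
  case 0
  then show ?case by simp
next
  case (Suc n)
  then obtain y' where y': "(r, y') \<in> arcs D ^^ n" "(y', y) \<in> arcs D"
    by auto
  have "arc_distance D r y' < Suc n"
    using arc_distance_le[OF y'(1)] by simp
  let ?Z = "{v. arc_distance D r v < Suc n}"
  have "(r, y') \<in> (arcs D \<inter> ?Z \<times> ({y} \<union> ?Z))\<^sup>*"
    using Suc.IH[OF y'(1)] by (rule rtrancl_mono[THEN subsetD, rotated])
      (use \<open>arc_distance D r y' < Suc n\<close> in auto)
  moreover have "(y', y) \<in> arcs D \<inter> ?Z \<times> ({y} \<union> ?Z)"
    using y'(2) \<open>arc_distance D r y' < Suc n\<close> by simp
  ultimately show ?case
    by (meson rtrancl_into_rtrancl)
qed

lemma dpath_of_trancl: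
  assumes "(x, y) \<in> E\<^sup>+" "x \<noteq> y" "E \<subseteq> arcs D"
  obtains p where "dpath D p x y" "internal p \<subseteq> Range E - {x, y}"
proof -
  have "(\<lambda>u v. (u, v) \<in> E)\<^sup>*\<^sup>* x y"
    using assms(1) by (simp add: rtranclp_rtrancl_eq trancl_into_rtrancl)
  then obtain xs where "rtrancl_path (\<lambda>u v. (u, v) \<in> E) x xs y"
    by (auto simp: rtranclp_eq_rtrancl_path)
  then obtain xs where xs: "rtrancl_path (\<lambda>u v. (u, v) \<in> E) x xs y" "distinct (x # xs)"
    by (rule rtrancl_path_distinct)
  have "xs \<noteq> []"
    using xs(1) assms(2) by (auto elim: rtrancl_path.cases)
  then have last: "last xs = y"
    using xs(1) by (rule rtrancl_path_last[rotated])
  have "dpath D (x # xs) x y"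
    unfolding dpath_def
  proof (intro conjI allI impI)
    fix i assume "Suc i < length (x # xs)"
    then have "((x # xs) ! i, xs ! i) \<in> E"
      using rtrancl_path_nth[OF xs(1)] by simp
    then show "((x # xs) ! i, (x # xs) ! Suc i) \<in> arcs D"
      using assms(3) by auto
  qed (use xs(2) \<open>xs \<noteq> []\<close> last in \<open>auto simp: Suc_le_eq\<close>)
  moreover have "internal (x # xs) \<subseteq> Range E - {x, y}"
  proof -
    have "set xs \<subseteq> Range E"
      using rtrancl_path_Range[OF xs(1)] by auto
    moreover have "y \<notin> set (butlast xs)"
      using xs(2) last by (cases xs rule: rev_cases) auto
    ultimately show ?thesis
      using xs(2) by (auto simp: internal_def dest: in_set_butlastD)
  qed
  ultimately show ?thesis
    using that by blast
qed

definition induced :: "'b digraph \<Rightarrow> 'b set \<Rightarrow> 'b digraph" where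
  "induced D S = (S, arcs D \<inter> S \<times> S)"

lemma verts_induced [simp]: "verts (induced D S) = S"
  and arcs_induced [simp]: "arcs (induced D S) = arcs D \<inter> S \<times> S"
  by (simp_all add: induced_def verts_def arcs_def)

lemma is_digraph_induced: "is_digraph D \<Longrightarrow> S \<subseteq> verts D \<Longrightarrow> is_digraph (induced D S)"
  unfolding is_digraph_def by (auto intro: finite_subset)

lemma verts_del_arc [simp]: "verts (del_arc F a) = verts F"
  and arcs_del_arc [simp]: "arcs (del_arc F a) = arcs F - {a}"
  by (simp_all add: del_arc_def verts_def arcs_def)

lemma dpath_mono: "dpath D' p x y \<Longrightarrow> arcs D' \<subseteq> arcs D \<Longrightarrow> dpath D p x y"
  unfolding dpath_def by blast

lemma set_dpath_induced:
  assumes "dpath (induced D S) p x y"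
  shows "set p \<subseteq> S"
proof
  fix v assume "v \<in> set p"
  then obtain i where i: "i < length p" "p ! i = v"
    by (meson in_set_conv_nth)
  have arcs: "(p ! k, p ! Suc k) \<in> arcs D \<inter> S \<times> S" if "Suc k < length p" for k
    using assms that unfolding dpath_def by simp
  show "v \<in> S"
  proof (cases "Suc i < length p")
    case True
    then show ?thesis using arcs i by blast
  next
    case False
    then have "Suc (i - 1) < length p" "Suc (i - 1) = i"
      using assms i unfolding dpath_def by auto
    then show ?thesis using arcs[of "i - 1"] i by auto
  qed
qed

lemma internal_subset_set: "internal p \<subseteq> set p"
  unfolding internal_def by (cases p) (auto dest: in_set_butlastD)

lemma internal_dpath_induced: "dpath (induced D S) p x y \<Longrightarrow> internal p \<subseteq> S"
  using internal_subset_set set_dpath_induced by (rule order_trans)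

lemma contains_subdivisionI:
  assumes "inj_on \<phi> (verts F)" "\<phi> ` verts F \<subseteq> verts D"
    and "\<And>x y. (x, y) \<in> arcs F \<Longrightarrow> dpath D (P (x, y)) (\<phi> x) (\<phi> y)"
    and "\<And>x y. (x, y) \<in> arcs F \<Longrightarrow> internal (P (x, y)) \<inter> \<phi> ` verts F = {}"
    and "\<And>e e'. e \<in> arcs F \<Longrightarrow> e' \<in> arcs F \<Longrightarrow> e \<noteq> e' \<Longrightarrow> internal (P e) \<inter> internal (P e') = {}"
  shows "contains_subdivision D F"
proof -
  have "\<forall>(x, y) \<in> arcs F. dpath D (P (x, y)) (\<phi> x) (\<phi> y) \<and> internal (P (x, y)) \<inter> \<phi> ` verts F = {}"
  proof
    fix e assume "e \<in> arcs F"
    then show "case e of (x, y) \<Rightarrow>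
        dpath D (P (x, y)) (\<phi> x) (\<phi> y) \<and> internal (P (x, y)) \<inter> \<phi> ` verts F = {}"
      using assms(3,4) by (cases e) simp
  qed
  then show ?thesis
    unfolding contains_subdivision_def using assms(1,2,5)
    by (intro exI[of _ \<phi>] exI[of _ P] conjI) simp_all
qed

lemma contains_subdivisionE:
  assumes "contains_subdivision D F"
  obtains \<phi> P where "inj_on \<phi> (verts F)" "\<phi> ` verts F \<subseteq> verts D"
    and "\<And>x y. (x, y) \<in> arcs F \<Longrightarrow> dpath D (P (x, y)) (\<phi> x) (\<phi> y)"
    and "\<And>x y. (x, y) \<in> arcs F \<Longrightarrow> internal (P (x, y)) \<inter> \<phi> ` verts F = {}"
    and "\<And>e e'. e \<in> arcs F \<Longrightarrow> e' \<in> arcs F \<Longrightarrow> e \<noteq> e' \<Longrightarrow> internal (P e) \<inter> internal (P e') = {}"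
  using assms unfolding contains_subdivision_def
proof (elim exE conjE)
  fix \<phi> P
  assume \<phi>: "inj_on \<phi> (verts F)" "\<phi> ` verts F \<subseteq> verts D"
    and paths: "\<forall>(x, y) \<in> arcs F. dpath D (P (x, y)) (\<phi> x) (\<phi> y)
      \<and> internal (P (x, y)) \<inter> \<phi> ` verts F = {}"
    and "\<forall>e \<in> arcs F. \<forall>e' \<in> arcs F. e \<noteq> e' \<longrightarrow> internal (P e) \<inter> internal (P e') = {}"
  moreover have "dpath D (P (x, y)) (\<phi> x) (\<phi> y) \<and> internal (P (x, y)) \<inter> \<phi> ` verts F = {}"
    if "(x, y) \<in> arcs F" for x y
    using bspec[OF paths that] by simp
  ultimately show thesis
    by (intro that[of \<phi> P]) simp_all
qed

lemma contains_subdivision_mono: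
  assumes "contains_subdivision D' F" "verts D' \<subseteq> verts D" "arcs D' \<subseteq> arcs D"
  shows "contains_subdivision D F"
  using assms(1)
proof (rule contains_subdivisionE)
  fix \<phi> P
  assume \<phi>: "inj_on \<phi> (verts F)" "\<phi> ` verts F \<subseteq> verts D'"
    and paths: "\<And>x y. (x, y) \<in> arcs F \<Longrightarrow> dpath D' (P (x, y)) (\<phi> x) (\<phi> y)"
    and ends: "\<And>x y. (x, y) \<in> arcs F \<Longrightarrow> internal (P (x, y)) \<inter> \<phi> ` verts F = {}"
    and disjoint: "\<And>e e'. e \<in> arcs F \<Longrightarrow> e' \<in> arcs F \<Longrightarrow> e \<noteq> e'
        \<Longrightarrow> internal (P e) \<inter> internal (P e') = {}"
  show ?thesis
  proof (rule contains_subdivisionI[of \<phi> F D P])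
    show "\<phi> ` verts F \<subseteq> verts D"
      using \<phi>(2) assms(2) by blast
    show "dpath D (P (x, y)) (\<phi> x) (\<phi> y)" if "(x, y) \<in> arcs F" for x y
      using paths[OF that] assms(3) by (rule dpath_mono)
  qed (use \<phi>(1) ends disjoint in blast)+
qed

lemma contains_subdivision_add_arc:
  assumes F: "is_digraph F" "a \<in> arcs F" and S: "S \<subseteq> verts D"
    and linked: "\<And>x y. x \<in> S \<Longrightarrow> y \<in> S \<Longrightarrow> x \<noteq> y \<Longrightarrow> \<exists>p. dpath D p x y \<and> internal p \<inter> S = {}"
    and "contains_subdivision (induced D S) (del_arc F a)"
  shows "contains_subdivision D F"
proof -
  obtain \<phi> P where \<phi>: "inj_on \<phi> (verts F)" "\<phi> ` verts F \<subseteq> S"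
    and paths: "\<And>x y. (x, y) \<in> arcs F - {a} \<Longrightarrow> dpath (induced D S) (P (x, y)) (\<phi> x) (\<phi> y)"
    and ends: "\<And>x y. (x, y) \<in> arcs F - {a} \<Longrightarrow> internal (P (x, y)) \<inter> \<phi> ` verts F = {}"
    and disjoint: "\<And>e e'. e \<in> arcs F - {a} \<Longrightarrow> e' \<in> arcs F - {a} \<Longrightarrow> e \<noteq> e'
        \<Longrightarrow> internal (P e) \<inter> internal (P e') = {}"
    by (rule contains_subdivisionE[OF assms(5), unfolded verts_del_arc arcs_del_arc verts_induced])
      (rule that)
  obtain u v where a: "a = (u, v)" by fastforce
  then have "u \<in> verts F" "v \<in> verts F" "u \<noteq> v"
    using F unfolding is_digraph_def by auto
  then have "\<phi> u \<in> S" "\<phi> v \<in> S" "\<phi> u \<noteq> \<phi> v"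
    using \<phi> by (auto dest: inj_onD)
  then obtain p where p: "dpath D p (\<phi> u) (\<phi> v)" "internal p \<inter> S = {}"
    using linked by blast
  have internal_in_S: "internal (P e) \<subseteq> S" if "e \<in> arcs F - {a}" for e
    using that internal_dpath_induced[OF paths] by (cases e) simp
  show ?thesis
  proof (rule contains_subdivisionI[of \<phi> F D "P(a := p)"])
    show "inj_on \<phi> (verts F)" "\<phi> ` verts F \<subseteq> verts D"
      using \<phi> S by auto
    show "dpath D ((P(a := p)) (x, y)) (\<phi> x) (\<phi> y)" if "(x, y) \<in> arcs F" for x y
    proof (cases "(x, y) = a")
      case True
      with p(1) a show ?thesis by simp
    next
      case False
      with that have "(x, y) \<in> arcs F - {a}" by simp
      with False show ?thesis
        using dpath_mono[OF paths] by simp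
    qed
    show "internal ((P(a := p)) (x, y)) \<inter> \<phi> ` verts F = {}" if "(x, y) \<in> arcs F" for x y
    proof (cases "(x, y) = a")
      case True
      with p(2) \<phi>(2) show ?thesis by auto
    next
      case False
      with that ends show ?thesis by simp
    qed
    show "internal ((P(a := p)) e) \<inter> internal ((P(a := p)) e') = {}"
      if "e \<in> arcs F" "e' \<in> arcs F" "e \<noteq> e'" for e e'
    proof (cases "e = a \<or> e' = a")
      case True
      with that internal_in_S[of e] internal_in_S[of e']
      have "internal ((P(a := p)) e) \<inter> internal ((P(a := p)) e') \<subseteq> internal p \<inter> S"
        by auto
      with p(2) show ?thesis
        by blast
    next
      case False
      with that disjoint show ?thesis
        by simp
    qed
  qed
qed

definition strong_component :: "'b digraph \<Rightarrow> 'b \<Rightarrow> 'b set" where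
  "strong_component D r = {v \<in> verts D. (r, v) \<in> (arcs D)\<^sup>* \<and> (v, r) \<in> (arcs D)\<^sup>*}"

definition distance_cell :: "'b digraph \<Rightarrow> 'b \<Rightarrow> nat \<Rightarrow> nat \<Rightarrow> 'b set" where
  "distance_cell D r i j =
     {v \<in> strong_component D r. arc_distance D r v = i \<and> arc_distance D v r = j}"

lemma strong_component_closed:
  assumes "x \<in> strong_component D r" "(x, y) \<in> (arcs D)\<^sup>*" "(y, x) \<in> (arcs D)\<^sup>*" "y \<in> verts D"
  shows "y \<in> strong_component D r"
  using assms unfolding strong_component_def by (blast intro: rtrancl_trans)

lemma distance_cell_linked:
  assumes x: "x \<in> distance_cell D r i j" and y: "y \<in> distance_cell D r i j" and "x \<noteq> y"
  shows "\<exists>p. dpath D p x y \<and> internal p \<inter> distance_cell D r i j = {}"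
proof -
  let ?S = "distance_cell D r i j"
  let ?E = "arcs D \<inter> (- ?S \<union> {x}) \<times> (- ?S \<union> {y})"
  have x_to_r: "(x, r) \<in> (arcs D)\<^sup>*" "arc_distance D x r = j"
    and r_to_y: "(r, y) \<in> (arcs D)\<^sup>*" "arc_distance D r y = i"
    using x y unfolding distance_cell_def strong_component_def by auto
  have "{v. arc_distance D v r < j} \<inter> ?S = {}" "{v. arc_distance D r v < i} \<inter> ?S = {}"
    unfolding distance_cell_def by auto
  then have "(x, r) \<in> ?E\<^sup>*" "(r, y) \<in> ?E\<^sup>*"
    using rtrancl_through_closer_to[OF relpow_arc_distance[OF x_to_r(1)]]
      rtrancl_through_closer_from[OF relpow_arc_distance[OF r_to_y(1)]] x_to_r(2) r_to_y(2)
    by (auto elim!: rtrancl_mono[THEN subsetD, rotated])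
  then have "(x, y) \<in> ?E\<^sup>+"
    using \<open>x \<noteq> y\<close> by (meson rtrancl_trans rtranclD)
  then obtain p where "dpath D p x y" "internal p \<subseteq> Range ?E - {x, y}"
    using \<open>x \<noteq> y\<close> by (rule dpath_of_trancl) blast
  then show ?thesis
    by blast
qed

lemma induces_acyclic_if_no_arcs: "arcs D \<inter> S \<times> S = {} \<Longrightarrow> induces_acyclic D S"
  unfolding induces_acyclic_def by (simp add: acyclic_def)

lemma dicolouring_card: "is_digraph D \<Longrightarrow> \<exists>f. dicolouring D (card (verts D)) f"
proof -
  assume D: "is_digraph D"
  then obtain f where f: "bij_betw f (verts D) {0..<card (verts D)}"
    using ex_bij_betw_finite_nat unfolding is_digraph_def by blast
  have "arcs D \<inter> {v \<in> verts D. f v = i} \<times> {v \<in> verts D. f v = i} = {}" for i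
    using D bij_betw_imp_inj_on[OF f] unfolding is_digraph_def by (auto dest: inj_onD)
  then have "induces_acyclic D {v \<in> verts D. f v = i}" for i
    by (rule induces_acyclic_if_no_arcs)
  moreover have "\<forall>v\<in>verts D. f v < card (verts D)"
    using f bij_betwE by fastforce
  ultimately show ?thesis
    unfolding dicolouring_def by blast
qed

lemma dicolouring_dichromatic: "is_digraph D \<Longrightarrow> \<exists>f. dicolouring D (dichromatic D) f"
  unfolding dichromatic_def by (rule LeastI_ex) (use dicolouring_card in blast)

lemma dichromatic_le: "dicolouring D k f \<Longrightarrow> dichromatic D \<le> k"
  unfolding dichromatic_def by (rule Least_le) blast

lemma dicolouring_mono:
  assumes "dicolouring D k f" "k \<le> l"
  shows "dicolouring D l f"
proof -
  have "induces_acyclic D {v \<in> verts D. f v = i}" if "i < l" for i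
  proof (cases "i < k")
    case True
    then show ?thesis using assms unfolding dicolouring_def by blast
  next
    case False
    then have "arcs D \<inter> {v \<in> verts D. f v = i} \<times> {v \<in> verts D. f v = i} = {}"
      using assms unfolding dicolouring_def by force
    then show ?thesis by (rule induces_acyclic_if_no_arcs)
  qed
  then show ?thesis
    using assms unfolding dicolouring_def by auto
qed

lemma dicolouring_empty: "verts D = {} \<Longrightarrow> dicolouring D k f"
  unfolding dicolouring_def by (simp add: induces_acyclic_if_no_arcs)

lemma le_if_le_Suc_same_parity:
  fixes a b :: nat
  assumes "b \<le> Suc a" "a mod 2 = b mod 2"
  shows "b \<le> a"
proof (rule ccontr)
  assume "\<not> b \<le> a"
  with assms(1) have "b = Suc a" by simp
  with assms(2) show False by (simp add: mod_Suc split: if_split_asm)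
qed

lemma arc_distances_antimono_if_same_parity:
  assumes "(a, b) \<in> arcs D" "a \<in> strong_component D r" "b \<in> strong_component D r"
    and "arc_distance D r a mod 2 = arc_distance D r b mod 2"
    and "arc_distance D a r mod 2 = arc_distance D b r mod 2"
  shows "arc_distance D r b \<le> arc_distance D r a \<and> arc_distance D a r \<le> arc_distance D b r"
proof -
  have "(r, a) \<in> (arcs D)\<^sup>*" "(b, r) \<in> (arcs D)\<^sup>*"
    using assms(2,3) unfolding strong_component_def by simp_all
  then have le: "arc_distance D r b \<le> Suc (arc_distance D r a)"
      "arc_distance D a r \<le> Suc (arc_distance D b r)"
    using arc_distance_from_Suc[OF _ assms(1)] arc_distance_to_Suc[OF assms(1)] by simp_all
  show ?thesis
    using le_if_le_Suc_same_parity[OF le(1) assms(4)]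
      le_if_le_Suc_same_parity[OF le(2) assms(5)[symmetric]]
    by (rule conjI)
qed

lemma acyclic_in_strong_component_if_acyclic_cells:
  assumes R: "R \<subseteq> arcs D \<inter> strong_component D r \<times> strong_component D r"
    and parity: "\<And>a b. (a, b) \<in> R \<Longrightarrow> arc_distance D r a mod 2 = arc_distance D r b mod 2
        \<and> arc_distance D a r mod 2 = arc_distance D b r mod 2"
    and cells: "\<And>i j. acyclic (R \<inter> distance_cell D r i j \<times> distance_cell D r i j)"
  shows "acyclic R"
proof (rule acyclic_if_acyclic_fibres)
  let ?\<pi> = "\<lambda>v. (arc_distance D r v, arc_distance D v r)"
  have arc_le: "arc_distance D r b \<le> arc_distance D r a \<and> arc_distance D a r \<le> arc_distance D b r"
    if "(a, b) \<in> R" for a b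
  proof -
    have "(a, b) \<in> arcs D" "a \<in> strong_component D r" "b \<in> strong_component D r"
      using that R by auto
    moreover have "arc_distance D r a mod 2 = arc_distance D r b mod 2"
      "arc_distance D a r mod 2 = arc_distance D b r mod 2"
      using parity[OF that] by simp_all
    ultimately show ?thesis
      by (rule arc_distances_antimono_if_same_parity)
  qed
  have le: "arc_distance D r y \<le> arc_distance D r x \<and> arc_distance D x r \<le> arc_distance D y r"
    if "(x, y) \<in> R\<^sup>*" for x y
  proof
    show "arc_distance D r y \<le> arc_distance D r x"
      using that by (rule antimono_along_rtrancl) (use arc_le in blast)
    have "(y, x) \<in> (R\<inverse>)\<^sup>*"
      using that by (simp add: rtrancl_converse)
    then show "arc_distance D x r \<le> arc_distance D y r"
      by (rule antimono_along_rtrancl) (use arc_le in blast)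
  qed
  show "?\<pi> x = ?\<pi> y" if "(x, y) \<in> R\<^sup>+" "(y, x) \<in> R\<^sup>+" for x y
    using le[OF trancl_into_rtrancl[OF that(1)]] le[OF trancl_into_rtrancl[OF that(2)]] by simp
  show "acyclic (R \<inter> {v. ?\<pi> v = k} \<times> {v. ?\<pi> v = k})" for k
  proof -
    obtain i j where "k = (i, j)" by fastforce
    then have "R \<inter> {v. ?\<pi> v = k} \<times> {v. ?\<pi> v = k} \<subseteq>
        R \<inter> distance_cell D r i j \<times> distance_cell D r i j"
      using R unfolding distance_cell_def by auto
    then show ?thesis
      using cells by (rule acyclic_subset[rotated])
  qed
qed

lemma acyclic_if_acyclic_inside_outside_strong_component:
  assumes R: "R \<subseteq> arcs D \<inter> verts D \<times> verts D"
    and inside: "acyclic (R \<inter> strong_component D r \<times> strong_component D r)"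
    and outside: "acyclic (R \<inter> (- strong_component D r) \<times> (- strong_component D r))"
  shows "acyclic R"
proof -
  let ?C = "strong_component D r"
  have closed: "(x \<in> ?C) = (y \<in> ?C)" if "(x, y) \<in> R\<^sup>+" "(y, x) \<in> R\<^sup>+" for x y
  proof -
    have "R\<^sup>+ \<subseteq> verts D \<times> verts D"
      using R by (intro trancl_subset_Sigma) blast
    then have "x \<in> verts D" "y \<in> verts D"
      using that(1) by auto
    moreover have "R \<subseteq> arcs D"
      using R by blast
    then have "(x, y) \<in> (arcs D)\<^sup>*" "(y, x) \<in> (arcs D)\<^sup>*"
      using trancl_mono[OF that(1)] trancl_mono[OF that(2)] by (simp_all add: trancl_into_rtrancl)
    ultimately show ?thesis
      using strong_component_closed[where x = x and y = y]
        strong_component_closed[where x = y and y = x]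
      by blast
  qed
  have "acyclic (R \<inter> {v. (v \<in> ?C) = k} \<times> {v. (v \<in> ?C) = k})" for k
    using inside outside by (cases k) (simp_all add: Compl_eq)
  with closed show ?thesis
    by (rule acyclic_if_acyclic_fibres)
qed

lemma acyclic_subset_colour_class:
  assumes "dicolouring (induced D S) k f" "c < k"
    and "R \<subseteq> arcs D \<inter> {v \<in> S. f v = c} \<times> {v \<in> S. f v = c}"
  shows "acyclic R"
proof -
  have "acyclic (arcs (induced D S) \<inter> {v \<in> S. f v = c} \<times> {v \<in> S. f v = c})"
    using assms(1,2) unfolding dicolouring_def induces_acyclic_def by simp
  then show ?thesis
    by (rule acyclic_subset) (use assms(3) in auto)
qed

definition component_colour :: "'b digraph \<Rightarrow> 'b \<Rightarrow> (nat \<Rightarrow> nat \<Rightarrow> 'b \<Rightarrow> nat) \<Rightarrow> 'b \<Rightarrow> nat" where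
  "component_colour D r g v = 4 * g (arc_distance D r v) (arc_distance D v r) v
     + 2 * (arc_distance D r v mod 2) + arc_distance D v r mod 2"

lemma component_colour_div:
    "component_colour D r g v div 4 = g (arc_distance D r v) (arc_distance D v r) v"
  and component_colour_div_mod: "component_colour D r g v div 2 mod 2 = arc_distance D r v mod 2"
  and component_colour_mod: "component_colour D r g v mod 2 = arc_distance D v r mod 2"
  unfolding component_colour_def by (auto simp: mod2_eq_if)

lemma component_colour_less:
  assumes g: "\<And>i j. dicolouring (induced D (distance_cell D r i j)) l (g i j)"
    and "v \<in> strong_component D r"
  shows "component_colour D r g v < 4 * l"
proof -
  have "v \<in> distance_cell D r (arc_distance D r v) (arc_distance D v r)"
    using assms(2) unfolding distance_cell_def by simp
  then have "component_colour D r g v div 4 < l"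
    using g unfolding dicolouring_def component_colour_div by simp
  then show ?thesis
    by (simp add: div_less_iff_less_mult)
qed

lemma acyclic_component_colour_class:
  assumes g: "\<And>i j. dicolouring (induced D (distance_cell D r i j)) l (g i j)" and "c < 4 * l"
  defines "T \<equiv> {v \<in> strong_component D r. component_colour D r g v = c}"
  shows "acyclic (arcs D \<inter> T \<times> T)"
proof (rule acyclic_in_strong_component_if_acyclic_cells)
  show "arcs D \<inter> T \<times> T \<subseteq> arcs D \<inter> strong_component D r \<times> strong_component D r"
    unfolding T_def by blast
  show "arc_distance D r a mod 2 = arc_distance D r b mod 2
      \<and> arc_distance D a r mod 2 = arc_distance D b r mod 2" if "(a, b) \<in> arcs D \<inter> T \<times> T" for a b
  proof -
    have "component_colour D r g a = component_colour D r g b"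
      using that unfolding T_def by simp
    then show ?thesis
      by (metis component_colour_div_mod component_colour_mod)
  qed
  fix i j
  let ?S = "distance_cell D r i j"
  have "g i j v = c div 4" if "v \<in> T" "v \<in> ?S" for v
    using that component_colour_div[of D r g v] unfolding T_def distance_cell_def by simp
  then have "arcs D \<inter> T \<times> T \<inter> ?S \<times> ?S \<subseteq>
      arcs D \<inter> {v \<in> ?S. g i j v = c div 4} \<times> {v \<in> ?S. g i j v = c div 4}"
    by auto
  moreover have "c div 4 < l"
    using assms(2) by (simp add: div_less_iff_less_mult)
  ultimately show "acyclic (arcs D \<inter> T \<times> T \<inter> ?S \<times> ?S)"
    by (intro acyclic_subset_colour_class[OF g])
qed

lemma dicolouring_from_distance_cells:
  assumes f: "dicolouring (induced D (verts D - strong_component D r)) (4 * l) f"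
    and g: "\<And>i j. dicolouring (induced D (distance_cell D r i j)) l (g i j)"
  defines "h \<equiv> \<lambda>v. if v \<in> strong_component D r then component_colour D r g v else f v"
  shows "dicolouring D (4 * l) h"
proof -
  let ?C = "strong_component D r"
  have "h v < 4 * l" if "v \<in> verts D" for v
    using f that component_colour_less[OF g] unfolding h_def dicolouring_def by auto
  moreover have "induces_acyclic D {v \<in> verts D. h v = c}" if "c < 4 * l" for c
  proof -
    let ?T = "{v \<in> verts D. h v = c}"
    let ?R = "arcs D \<inter> ?T \<times> ?T"
    let ?K = "{v \<in> ?C. component_colour D r g v = c}"
    have "?R \<inter> ?C \<times> ?C \<subseteq> arcs D \<inter> ?K \<times> ?K"
      unfolding h_def by auto
    then have inside: "acyclic (?R \<inter> ?C \<times> ?C)"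
      using acyclic_component_colour_class[OF g that] by (rule acyclic_subset[rotated])
    have "?R \<inter> (- ?C) \<times> (- ?C) \<subseteq>
        arcs D \<inter> {v \<in> verts D - ?C. f v = c} \<times> {v \<in> verts D - ?C. f v = c}"
      unfolding h_def by auto
    then have outside: "acyclic (?R \<inter> (- ?C) \<times> (- ?C))"
      by (rule acyclic_subset_colour_class[OF f that])
    have "?R \<subseteq> arcs D \<inter> verts D \<times> verts D"
      by blast
    then show ?thesis
      using inside outside unfolding induces_acyclic_def
      by (rule acyclic_if_acyclic_inside_outside_strong_component)
  qed
  ultimately show ?thesis
    unfolding dicolouring_def by blast
qed

lemma dichromatic_induced_less_if_linked:
  fixes D :: "nat digraph"
  assumes F: "is_digraph F" "a \<in> arcs F" and bound: "maderian_bound (del_arc F a) m"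
    and D: "is_digraph D" "\<not> contains_subdivision D F" and S: "S \<subseteq> verts D"
    and linked: "\<And>x y. x \<in> S \<Longrightarrow> y \<in> S \<Longrightarrow> x \<noteq> y \<Longrightarrow> \<exists>p. dpath D p x y \<and> internal p \<inter> S = {}"
  shows "dichromatic (induced D S) < m"
proof (rule ccontr)
  assume "\<not> dichromatic (induced D S) < m"
  then have "contains_subdivision (induced D S) (del_arc F a)"
    using bound[unfolded maderian_bound_def, rule_format, OF is_digraph_induced[OF D(1) S]] by simp
  then have "contains_subdivision D F"
    using contains_subdivision_add_arc[OF F S linked] by blast
  with D(2) show False ..
qed

lemma dicolouring_if_no_subdivision:
  fixes D :: "nat digraph"
  assumes F: "is_digraph F" "a \<in> arcs F" and bound: "maderian_bound (del_arc F a) m"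
  shows "is_digraph D \<Longrightarrow> \<not> contains_subdivision D F \<Longrightarrow> \<exists>h. dicolouring D (4 * (m - 1)) h"
proof (induction "card (verts D)" arbitrary: D rule: less_induct)
  case less
  show ?case
  proof (cases "verts D = {}")
    case True
    then show ?thesis by (blast intro: dicolouring_empty)
  next
    case False
    then obtain r where r: "r \<in> verts D" by blast
    let ?U = "verts D - strong_component D r"
    have "r \<in> strong_component D r"
      using r unfolding strong_component_def by simp
    then have "card ?U < card (verts D)"
      using less.prems(1) r unfolding is_digraph_def by (auto intro: psubset_card_mono)
    moreover have "\<not> contains_subdivision (induced D ?U) F"
      using less.prems(2) contains_subdivision_mono[of "induced D ?U" F D] by auto
    ultimately obtain f where "dicolouring (induced D ?U) (4 * (m - 1)) f"
      using less.hyps[of "induced D ?U"] is_digraph_induced[OF less.prems(1)] by auto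
    moreover have "\<exists>g. dicolouring (induced D (distance_cell D r i j)) (m - 1) g" for i j
    proof -
      have S: "distance_cell D r i j \<subseteq> verts D"
        unfolding distance_cell_def strong_component_def by auto
      have "dichromatic (induced D (distance_cell D r i j)) \<le> m - 1"
        using dichromatic_induced_less_if_linked[OF F bound less.prems S distance_cell_linked]
        by simp
      then show ?thesis
        using dicolouring_dichromatic[OF is_digraph_induced[OF less.prems(1) S]] dicolouring_mono
        by blast
    qed
    then obtain g where "\<And>i j. dicolouring (induced D (distance_cell D r i j)) (m - 1) (g i j)"
      by metis
    ultimately show ?thesis
      by (blast intro: dicolouring_from_distance_cells)
  qed
qed

lemma maderian_bound_gt_0:
  assumes "maderian_bound F c" "verts F \<noteq> {}"
  shows "c > 0"
proof (rule ccontr)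
  assume "\<not> c > 0"
  moreover have "is_digraph ({}, {} :: (nat \<times> nat) set)"
    unfolding is_digraph_def by (simp add: verts_def arcs_def)
  ultimately have "contains_subdivision ({}, {} :: (nat \<times> nat) set) F"
    using assms(1)[unfolded maderian_bound_def, rule_format] by simp
  moreover have "verts ({}, {} :: (nat \<times> nat) set) = {}"
    by (simp add: verts_def)
  ultimately show False
    using assms(2) unfolding contains_subdivision_def by blast
qed

theorem lemma31:
  fixes F :: "'a digraph" and a :: "'a \<times> 'a"
  assumes "is_digraph F"
    and "a \<in> arcs F"
    and "maderian (del_arc F a)"
  shows "maderian F \<and> mad F \<le> 4 * mad (del_arc F a) - 3"
proof -
  define m where "m = mad (del_arc F a)"
  have bound: "maderian_bound (del_arc F a) m"
    using assms(3) unfolding maderian_def mad_def m_def by (metis LeastI_ex)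
  have "verts (del_arc F a) \<noteq> {}"
    using assms(1,2) unfolding is_digraph_def by auto
  with bound have "m > 0"
    by (rule maderian_bound_gt_0)
  have "maderian_bound F (4 * m - 3)"
    unfolding maderian_bound_def
  proof (intro allI impI)
    fix D :: "nat digraph"
    assume D: "is_digraph D" "4 * m - 3 \<le> dichromatic D"
    show "contains_subdivision D F"
    proof (rule ccontr)
      assume "\<not> contains_subdivision D F"
      then have "dichromatic D \<le> 4 * (m - 1)"
        using dicolouring_if_no_subdivision[OF assms(1,2) bound D(1)] dichromatic_le by blast
      with D(2) \<open>m > 0\<close> show False by linarith
    qed
  qed
  then show ?thesis
    unfolding maderian_def mad_def m_def by (blast intro: Least_le)
qed

end
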